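(* Fix integers $n\ge 2$ and $u\in\{1,\dots,n-1\}$ with $u\ge n/2$, and positive weights $d_1,\dots,d_{n-1}$. Let $(\beta^*_{u,j})_{j\ge1}$ be a real sequence such that $\bar\beta_p^2=\frac1p\sum_{j=1}^p(\beta^*_{u,j})^2$ converges to a finite limit $\bar\beta^2$ as $p\to\infty$, and let $\sigma^2>0$. For each $p\ge1$, let $\beta^*\in\mathbb{R}^{(n-1)\times p}$ be the matrix whose only nonzero row is the $u$-th row $(\beta^*_{u,1},\dots,\beta^*_{u,p})$, let $W\in\mathbb{R}^{n\times p}$ have i.i.d. $N(0,\sigma^2)$ entries, set $\bar Y=\bar X\beta^*+W$, $\hat c=\bar X^\top\bar Y$, and let $\hat u_p\in\arg\max_{i\in\{1,\dots,n-1\}}\|\hat c_{i,\bullet}\|$ be the first change-point selected by the group fused Lasso. For $i\in\{1,\dots,n-1\}$ define $$G_i=d_i^2\frac{i(n-i)}{n}\sigma^2+\frac{\bar\beta^2d_i^2d_u^2}{n^2}\times\begin{cases}i^2(n-u)^2 & \text{if } i\le u,\\ u^2(n-i)^2 & \text{if } i>u.\end{cases}$$ Then $\mathbb{P}\big(\hat u_p\in\arg\max_{i\in\{1,\dots,n-1\}}G_i\big)\to1$ as $p\to\infty$.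
   Context: For positive weights $d_1,\dots,d_{n-1}$, $X$ is the $n\times(n-1)$ matrix with $X_{k,j}=d_j$ if $k>j$ and $0$ otherwise, and $\bar X$ is obtained from $X$ by centering each column to mean zero; explicitly $\bar X_{k,i}=(i/n-1)d_i$ for $k\le i$ and $\bar X_{k,i}=(i/n)d_i$ for $k>i$. The group fused Lasso on centered data $\bar Y\in\mathbb{R}^{n\times p}$ with parameter $\lambda>0$ is $\min_{\beta\in\mathbb{R}^{(n-1)\times p}}\frac12\|\bar Y-\bar X\beta\|^2+\lambda\sum_{i=1}^{n-1}\|\beta_{i,\bullet}\|$ (Frobenius/Euclidean norms; $M_{i,\bullet}$ is the $i$-th row of $M$). Its solution is $\beta=0$ exactly when $\lambda\ge\max_i\|(\bar X^\top\bar Y)_{i,\bullet}\|$, and the "first change-point selected" is an index $i$ attaining $\max_i\|(\bar X^\top\bar Y)_{i,\bullet}\|$ (ties broken arbitrarily). *)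

theory Defs
  imports "HOL-Probability.Probability"
begin

text \<open>Design matrix X (n x (n-1)), rows k = 1..n, columns j = 1..n-1:
  X k j = d j if k > j, 0 otherwise.\<close>
definition Xmat :: "(nat \<Rightarrow> real) \<Rightarrow> nat \<Rightarrow> nat \<Rightarrow> real" where
  "Xmat d k j = (if k > j then d j else 0)"

definition Xbar :: "nat \<Rightarrow> (nat \<Rightarrow> real) \<Rightarrow> nat \<Rightarrow> nat \<Rightarrow> real" where
  "Xbar n d k j = Xmat d k j - (\<Sum>k'=1..n. Xmat d k' j) / real n"

definition beta_star :: "nat \<Rightarrow> (nat \<Rightarrow> real) \<Rightarrow> nat \<Rightarrow> nat \<Rightarrow> real" where
  "beta_star u b i j = (if i = u then b j else 0)"

definition Ybar :: "nat \<Rightarrow> (nat \<Rightarrow> real) \<Rightarrow> nat \<Rightarrow> (nat \<Rightarrow> real) \<Rightarrow> (nat \<times> nat \<Rightarrow> real)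
    \<Rightarrow> nat \<Rightarrow> nat \<Rightarrow> real" where
  "Ybar n d u b W k j = (\<Sum>i=1..n-1. Xbar n d k i * beta_star u b i j) + W (k, j)"

definition chat :: "nat \<Rightarrow> (nat \<Rightarrow> real) \<Rightarrow> nat \<Rightarrow> (nat \<Rightarrow> real) \<Rightarrow> (nat \<times> nat \<Rightarrow> real)
    \<Rightarrow> nat \<Rightarrow> nat \<Rightarrow> real" where
  "chat n d u b W i j = (\<Sum>k=1..n. Xbar n d k i * Ybar n d u b W k j)"

definition chat_row_norm :: "nat \<Rightarrow> (nat \<Rightarrow> real) \<Rightarrow> nat \<Rightarrow> (nat \<Rightarrow> real) \<Rightarrow> nat
    \<Rightarrow> (nat \<times> nat \<Rightarrow> real) \<Rightarrow> nat \<Rightarrow> real" where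
  "chat_row_norm n d u b p W i = sqrt (\<Sum>j=1..p. (chat n d u b W i j)\<^sup>2)"

definition argmax_set :: "nat set \<Rightarrow> (nat \<Rightarrow> real) \<Rightarrow> nat set" where
  "argmax_set A f = {i \<in> A. \<forall>i'\<in>A. f i' \<le> f i}"

text \<open>Noise distribution: W has i.i.d. N(0, sd^2) entries, indexed by {1..n} x {1..p}
  (sd is the standard deviation).\<close>
definition noise_space :: "real \<Rightarrow> nat \<Rightarrow> nat \<Rightarrow> (nat \<times> nat \<Rightarrow> real) measure" where
  "noise_space sd n p =
     PiM ({1..n} \<times> {1..p}) (\<lambda>_. density lborel (normal_density 0 sd))"

text \<open>The quantity G_i, with sd^2 the noise variance and bb2 = limit of bar beta_p^2.\<close>
definition Gfun :: "nat \<Rightarrow> (nat \<Rightarrow> real) \<Rightarrow> nat \<Rightarrow> real \<Rightarrow> real \<Rightarrow> nat \<Rightarrow> real" where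
  "Gfun n d u sd bb2 i =
     (d i)\<^sup>2 * (real i * real (n - i) / real n) * sd\<^sup>2
     + bb2 * (d i)\<^sup>2 * (d u)\<^sup>2 / (real n)\<^sup>2 *
       (if i \<le> u then (real i)\<^sup>2 * (real (n - u))\<^sup>2 else (real u)\<^sup>2 * (real (n - i))\<^sup>2)"

end

theory Submission
  imports Defs
begin

(* Write T_p(i) = |X^T Y_(i,.)|^2 / p for the normalised squared row norms; they have the same
   maximisers as the row norms.  Row i of X^T Y equals a_i beta*_(u,.) + Z_(i,.), where
   a_i = (X^T X)_(i,u) and the noise entries Z_(i,j) = sum_k X_(k,i) W_(k,j) are centred Gaussian
   combinations of the j-th noise column with variance s_i.  Hence T_p(i) - g_p(i), with
   g_p(i) = a_i^2 (1/p) sum_j beta*_(u,j)^2 + s_i, is the average over the p columns of the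
   independent centred variables 2 a_i beta*_(u,j) Z_(i,j) + Z_(i,j)^2 - s_i, so its mean square is
   O(1/p).  Moreover g_p(i) tends to a_i^2 bar_beta^2 + s_i, which is exactly G_i.

   An abstract consistency lemma then shows that,
   whenever random criteria converge in mean square to deterministic ones whose limits are G,
   every maximiser of the criteria lies in argmax G with probability tending to one (stability of
   argmax over a finite set plus Markov's inequality).  The theorem is that lemma applied to T_p.
   The argument uses only u in {1..n-1}; the remaining hypotheses locate argmax G explicitly. *)

definition gauss :: "real \<Rightarrow> real measure" where
  "gauss sd = density lborel (normal_density 0 sd)"

lemma noise_space_eq: "noise_space sd n p = PiM ({1..n} \<times> {1..p}) (\<lambda>_. gauss sd)"
  unfolding noise_space_def gauss_def ..

lemma sets_gauss [simp]: "sets (gauss sd) = sets borel"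
  by (simp add: gauss_def)

lemma measurable_gauss [simp]: "measurable (gauss sd) M = measurable borel M"
  by (rule measurable_cong_sets) simp_all

lemma prob_space_gauss: "sd > 0 \<Longrightarrow> prob_space (gauss sd)"
  unfolding gauss_def by (rule prob_space_normal_density)

lemma integral_gauss:
  "(f :: real \<Rightarrow> real) \<in> borel_measurable borel \<Longrightarrow>
     integral\<^sup>L (gauss sd) f = (\<integral>x. normal_density 0 sd x * f x \<partial>lborel)"
  unfolding gauss_def by (subst integral_density) auto

lemma integrable_gauss_power: "sd > 0 \<Longrightarrow> integrable (gauss sd) (\<lambda>x. x ^ k)"
  unfolding gauss_def
  using integrable_normal_moment[of sd 0 k] by (subst integrable_density) auto

lemma gauss_moment_1: "sd > 0 \<Longrightarrow> (\<integral>x. x \<partial>gauss sd) = 0"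
  using integral_normal_moment_odd[of sd 0 0] by (subst integral_gauss) auto

lemma gauss_moment_2: "sd > 0 \<Longrightarrow> (\<integral>x. x\<^sup>2 \<partial>gauss sd) = sd\<^sup>2"
  using integral_normal_moment_even[of sd 0 1] by (subst integral_gauss) auto

lemma gauss_moment_4:
  assumes "sd > 0" shows "(\<integral>x. x ^ 4 \<partial>gauss sd) = 3 * sd ^ 4"
proof -
  have "(\<integral>x. x ^ 4 \<partial>gauss sd) = (\<integral>x. normal_density 0 sd x * (x - 0) ^ (2 * 2) \<partial>lborel)"
    by (subst integral_gauss) auto
  also have "\<dots> = fact (2 * 2) / ((2 / sd\<^sup>2) ^ 2 * fact 2)"
    using integral_normal_moment_even[OF assms, of 0 2] .
  also have "\<dots> = 3 * sd ^ 4"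
    using assms by (simp add: fact_numeral field_simps power2_eq_square eval_nat_numeral)
  finally show ?thesis .
qed

abbreviation iid_gauss :: "'i set \<Rightarrow> real \<Rightarrow> ('i \<Rightarrow> real) measure" where
  "iid_gauss I sd \<equiv> PiM I (\<lambda>_. gauss sd)"

lemma prob_space_iid_gauss: "sd > 0 \<Longrightarrow> prob_space (iid_gauss I sd)"
  by (intro prob_space_PiM prob_space_gauss)

lemma coordinate_measurable [measurable]: "(\<lambda>\<omega>. \<omega> x) \<in> borel_measurable (iid_gauss I sd)"
proof (cases "x \<in> I")
  case True
  then have "(\<lambda>\<omega>. \<omega> x) \<in> measurable (iid_gauss I sd) (gauss sd)"
    by (rule measurable_component_singleton)
  then show ?thesis by (simp add: measurable_cong_sets[OF refl sets_gauss])
next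
  case False
  then have "(\<lambda>\<omega>. \<omega> x) \<in> borel_measurable (iid_gauss I sd) \<longleftrightarrow>
      (\<lambda>\<omega>. undefined :: real) \<in> borel_measurable (iid_gauss I sd)"
    using PiE_arb[of _ I] by (intro measurable_cong) (auto simp: space_PiM)
  then show ?thesis by simp
qed

lemma distr_coordinate:
  assumes "sd > 0" "x \<in> I"
  shows "distr (iid_gauss I sd) (gauss sd) (\<lambda>\<omega>. \<omega> x) = gauss sd"
  using distr_PiM_component[of I "\<lambda>_. gauss sd" x] assms prob_space_gauss by auto

lemma
  assumes "sd > 0" "x \<in> I" and [measurable]: "(f :: real \<Rightarrow> real) \<in> borel_measurable borel"
  shows integral_coordinate: "(\<integral>\<omega>. f (\<omega> x) \<partial>iid_gauss I sd) = integral\<^sup>L (gauss sd) f"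
    and integrable_coordinate:
      "integrable (gauss sd) f \<Longrightarrow> integrable (iid_gauss I sd) (\<lambda>\<omega>. f (\<omega> x))"
proof -
  have m: "(\<lambda>\<omega>. \<omega> x) \<in> measurable (iid_gauss I sd) (gauss sd)"
    using assms(2) by (rule measurable_component_singleton)
  note distr = distr_coordinate[OF assms(1,2)]
  show "(\<integral>\<omega>. f (\<omega> x) \<partial>iid_gauss I sd) = integral\<^sup>L (gauss sd) f"
    using integral_distr[OF m, of f] unfolding distr by simp
  show "integrable (iid_gauss I sd) (\<lambda>\<omega>. f (\<omega> x))" if "integrable (gauss sd) f"
    using that integrable_distr_eq[OF m, of f] unfolding distr by simp
qed

lemma integrable_coordinate_power:
  "sd > 0 \<Longrightarrow> x \<in> I \<Longrightarrow> integrable (iid_gauss I sd) (\<lambda>\<omega>. (\<omega> x) ^ k)"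
  using integrable_coordinate[of sd x I "\<lambda>t. t ^ k"] integrable_gauss_power by auto

lemma indep_coordinates:
  assumes "sd > 0" "finite I" "I \<noteq> {}"
  shows "prob_space.indep_vars (iid_gauss I sd) (\<lambda>_. gauss sd) (\<lambda>x \<omega>. \<omega> x) I"
proof -
  interpret product_prob_space "\<lambda>_. gauss sd" I
    by (simp add: product_prob_space_def product_prob_space_axioms_def product_sigma_finite_def
        prob_space_gauss[OF assms(1)] prob_space_imp_sigma_finite)
  have "distr (iid_gauss I sd) (iid_gauss I sd) (\<lambda>\<omega>. restrict \<omega> I) = iid_gauss I sd"
    using distr_PiM_restrict_finite[of I] assms by simp
  moreover have "(\<Pi>\<^sub>M x\<in>I. distr (iid_gauss I sd) (gauss sd) (\<lambda>\<omega>. \<omega> x)) = iid_gauss I sd"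
    by (intro PiM_cong refl distr_coordinate[OF assms(1)])
  ultimately show ?thesis
    using assms(3) by (subst indep_vars_iff_distr_eq_PiM')
      (auto intro: measurable_component_singleton simp: restrict_def)
qed

lemma coordinate_product:
  assumes sd: "sd > 0" and I: "finite I" and x: "x \<in> I" and y: "y \<in> I" and xy: "x \<noteq> y"
  shows "integrable (iid_gauss I sd) (\<lambda>\<omega>. \<omega> x * \<omega> y)"
    and "(\<integral>\<omega>. \<omega> x * \<omega> y \<partial>iid_gauss I sd) = 0"
proof -
  interpret P: prob_space "iid_gauss I sd" by (rule prob_space_iid_gauss[OF sd])
  have "P.indep_vars (\<lambda>_. gauss sd) (\<lambda>x \<omega>. \<omega> x) {x, y}"
    by (rule P.indep_vars_subset[OF indep_coordinates[OF sd I]]) (use x y in auto)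
  then have ind: "P.indep_vars (\<lambda>_. borel) (\<lambda>l \<omega>. (\<lambda>t::real. t) (\<omega> l)) {x, y}"
    by (rule P.indep_vars_compose2) simp
  have int: "l \<in> {x, y} \<Longrightarrow> integrable (iid_gauss I sd) (\<lambda>\<omega>. \<omega> l)" for l
    using integrable_coordinate_power[OF sd, of _ I 1] x y by auto
  have "integrable (iid_gauss I sd) (\<lambda>\<omega>. \<Prod>l\<in>{x, y}. \<omega> l)"
    by (rule P.indep_vars_integrable[OF _ ind]) (use int in auto)
  then show "integrable (iid_gauss I sd) (\<lambda>\<omega>. \<omega> x * \<omega> y)" using xy by simp
  have "(\<integral>\<omega>. (\<Prod>l\<in>{x, y}. \<omega> l) \<partial>iid_gauss I sd) = (\<Prod>l\<in>{x, y}. \<integral>\<omega>. \<omega> l \<partial>iid_gauss I sd)"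
    by (rule P.indep_vars_lebesgue_integral[OF _ ind]) (use int in auto)
  moreover have "(\<integral>\<omega>. \<omega> x \<partial>iid_gauss I sd) = 0"
    using integral_coordinate[OF sd x, of "\<lambda>t. t"] gauss_moment_1[OF sd] by simp
  ultimately show "(\<integral>\<omega>. \<omega> x * \<omega> y \<partial>iid_gauss I sd) = 0" using xy by simp
qed

lemma integral_double_sum:
  fixes f :: "'a \<Rightarrow> 'b \<Rightarrow> 'c \<Rightarrow> real"
  assumes "\<And>a b. a \<in> A \<Longrightarrow> b \<in> B \<Longrightarrow> integrable M (f a b)"
  shows "integrable M (\<lambda>x. \<Sum>a\<in>A. \<Sum>b\<in>B. f a b x)"
    and "(\<integral>x. (\<Sum>a\<in>A. \<Sum>b\<in>B. f a b x) \<partial>M) = (\<Sum>a\<in>A. \<Sum>b\<in>B. \<integral>x. f a b x \<partial>M)"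
  using assms by (auto simp: Bochner_Integration.integral_sum intro!: sum.cong)

lemma coordinate_covariance:
  assumes sd: "sd > 0" and I: "finite I" and x: "x \<in> I" and y: "y \<in> I"
  shows "integrable (iid_gauss I sd) (\<lambda>\<omega>. \<omega> x * \<omega> y)"
    and "(\<integral>\<omega>. \<omega> x * \<omega> y \<partial>iid_gauss I sd) = (if x = y then sd\<^sup>2 else 0)"
proof -
  have sq: "integrable (iid_gauss I sd) (\<lambda>\<omega>. \<omega> x * \<omega> x)"
    "(\<integral>\<omega>. \<omega> x * \<omega> x \<partial>iid_gauss I sd) = sd\<^sup>2"
    using integrable_coordinate_power[OF sd x, of 2] gauss_moment_2[OF sd]
      integral_coordinate[OF sd x, of "\<lambda>t. t\<^sup>2"] by (simp_all add: power2_eq_square)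
  show "integrable (iid_gauss I sd) (\<lambda>\<omega>. \<omega> x * \<omega> y)"
    using sq coordinate_product[OF sd I x y] by (cases "x = y") auto
  show "(\<integral>\<omega>. \<omega> x * \<omega> y \<partial>iid_gauss I sd) = (if x = y then sd\<^sup>2 else 0)"
    using sq coordinate_product[OF sd I x y] by (cases "x = y") auto
qed

definition colcomb :: "nat \<Rightarrow> (nat \<Rightarrow> real) \<Rightarrow> nat \<Rightarrow> (nat \<times> nat \<Rightarrow> real) \<Rightarrow> real" where
  "colcomb n c j \<omega> = (\<Sum>k=1..n. c k * \<omega> (k, j))"

lemma colcomb_measurable [measurable]: "colcomb n c j \<in> borel_measurable (iid_gauss I sd)"
  unfolding colcomb_def by measurable

lemma power4_sum_le: "(\<Sum>k\<in>F. f k) ^ 4 \<le> real (card F) ^ 3 * (\<Sum>k\<in>F. (f k) ^ 4)"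
  for f :: "'a \<Rightarrow> real"
proof -
  have "(\<Sum>k\<in>F. f k) ^ 4 = ((\<Sum>k\<in>F. f k)\<^sup>2)\<^sup>2" by simp
  also have "\<dots> \<le> ((\<Sum>k\<in>F. (f k)\<^sup>2) * card F)\<^sup>2"
    by (rule power_mono[OF sum_squared_le_sum_of_squares]) simp
  also have "\<dots> = (\<Sum>k\<in>F. (f k)\<^sup>2)\<^sup>2 * (real (card F))\<^sup>2"
    by (simp add: power_mult_distrib)
  also have "\<dots> \<le> (\<Sum>k\<in>F. ((f k)\<^sup>2)\<^sup>2) * card F * (real (card F))\<^sup>2"
    by (rule mult_right_mono[OF sum_squared_le_sum_of_squares]) simp
  also have "\<dots> = real (card F) ^ 3 * (\<Sum>k\<in>F. (f k) ^ 4)"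
    by (simp add: power2_eq_square eval_nat_numeral algebra_simps)
  finally show ?thesis .
qed

context
  fixes sd :: real and n p j :: nat and c :: "nat \<Rightarrow> real"
  assumes sd: "sd > 0" and j: "j \<in> {1..p}"
begin

abbreviation "P \<equiv> iid_gauss ({1..n} \<times> {1..p}) sd"

lemma colcomb_moment_1:
  shows "integrable P (colcomb n c j)" and "(\<integral>\<omega>. colcomb n c j \<omega> \<partial>P) = 0"
proof -
  have int: "k \<in> {1..n} \<Longrightarrow> integrable P (\<lambda>\<omega>. \<omega> (k, j))" for k
    using integrable_coordinate_power[OF sd, of "(k, j)" _ 1] j by auto
  have "k \<in> {1..n} \<Longrightarrow> (\<integral>\<omega>. \<omega> (k, j) \<partial>P) = 0" for k
    using integral_coordinate[OF sd, of "(k, j)" _ "\<lambda>t. t"] gauss_moment_1[OF sd] j by simp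
  with int show "integrable P (colcomb n c j)" "(\<integral>\<omega>. colcomb n c j \<omega> \<partial>P) = 0"
    unfolding colcomb_def by (auto simp: Bochner_Integration.integral_sum)
qed

lemma colcomb_moment_2:
  shows "integrable P (\<lambda>\<omega>. (colcomb n c j \<omega>)\<^sup>2)"
    and "(\<integral>\<omega>. (colcomb n c j \<omega>)\<^sup>2 \<partial>P) = sd\<^sup>2 * (\<Sum>k=1..n. (c k)\<^sup>2)"
proof -
  have expand: "(colcomb n c j \<omega>)\<^sup>2 =
      (\<Sum>k=1..n. \<Sum>k'=1..n. c k * c k' * (\<omega> (k, j) * \<omega> (k', j)))" for \<omega>
    unfolding colcomb_def power2_eq_square sum_product by (simp add: algebra_simps)
  have int: "integrable P (\<lambda>\<omega>. \<omega> (k, j) * \<omega> (k', j))"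
    and cov: "(\<integral>\<omega>. \<omega> (k, j) * \<omega> (k', j) \<partial>P) = (if k = k' then sd\<^sup>2 else 0)"
    if "k \<in> {1..n}" "k' \<in> {1..n}" for k k'
    using coordinate_covariance[OF sd, of "{1..n} \<times> {1..p}" "(k, j)" "(k', j)"] that j by auto
  show "integrable P (\<lambda>\<omega>. (colcomb n c j \<omega>)\<^sup>2)"
    unfolding expand by (intro integral_double_sum integrable_mult_right int)
  have "(\<integral>\<omega>. (colcomb n c j \<omega>)\<^sup>2 \<partial>P) =
      (\<Sum>k=1..n. \<Sum>k'=1..n. \<integral>\<omega>. c k * c k' * (\<omega> (k, j) * \<omega> (k', j)) \<partial>P)"
    unfolding expand by (intro integral_double_sum(2) integrable_mult_right int)
  also have "\<dots> = (\<Sum>k=1..n. \<Sum>k'=1..n. c k * c k' * (if k = k' then sd\<^sup>2 else 0))"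
    by (intro sum.cong refl) (simp only: cov integral_mult_right_zero)
  also have "\<dots> = sd\<^sup>2 * (\<Sum>k=1..n. (c k)\<^sup>2)"
    by (simp add: sum_distrib_left power2_eq_square if_distrib sum.delta cong: if_cong)
      (simp add: algebra_simps)
  finally show "(\<integral>\<omega>. (colcomb n c j \<omega>)\<^sup>2 \<partial>P) = sd\<^sup>2 * (\<Sum>k=1..n. (c k)\<^sup>2)" .
qed

lemma colcomb_moment_4:
  shows "integrable P (\<lambda>\<omega>. (colcomb n c j \<omega>) ^ 4)"
    and "(\<integral>\<omega>. (colcomb n c j \<omega>) ^ 4 \<partial>P) \<le> 3 * sd ^ 4 * real n ^ 3 * (\<Sum>k=1..n. (c k) ^ 4)"
proof -
  define B where "B \<omega> = real n ^ 3 * (\<Sum>k=1..n. (c k) ^ 4 * (\<omega> (k, j)) ^ 4)" for \<omega>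
  have le: "(colcomb n c j \<omega>) ^ 4 \<le> B \<omega>" for \<omega>
    using power4_sum_le[of "\<lambda>k. c k * \<omega> (k, j)" "{1..n}"]
    unfolding colcomb_def B_def by (simp add: power_mult_distrib)
  have int4: "k \<in> {1..n} \<Longrightarrow> integrable P (\<lambda>\<omega>. (\<omega> (k, j)) ^ 4)" for k
    using integrable_coordinate_power[OF sd, of "(k, j)" _ 4] j by auto
  have mom4: "k \<in> {1..n} \<Longrightarrow> (\<integral>\<omega>. (\<omega> (k, j)) ^ 4 \<partial>P) = 3 * sd ^ 4" for k
    using integral_coordinate[OF sd, of "(k, j)" _ "\<lambda>t. t ^ 4"] gauss_moment_4[OF sd] j by simp
  have intB: "integrable P B" unfolding B_def
    by (intro integrable_mult_right Bochner_Integration.integrable_sum int4) auto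
  show int: "integrable P (\<lambda>\<omega>. (colcomb n c j \<omega>) ^ 4)"
    by (rule Bochner_Integration.integrable_bound[OF intB]) (use le in \<open>auto intro!: AE_I2 order_trans[OF _ abs_ge_self]\<close>)
  have "(\<integral>\<omega>. (colcomb n c j \<omega>) ^ 4 \<partial>P) \<le> (\<integral>\<omega>. B \<omega> \<partial>P)"
    by (rule integral_mono[OF int intB le])
  also have "\<dots> = 3 * sd ^ 4 * real n ^ 3 * (\<Sum>k=1..n. (c k) ^ 4)"
    unfolding B_def using int4 mom4
    by (simp add: Bochner_Integration.integral_sum sum_distrib_left sum_distrib_right algebra_simps)
  finally show "(\<integral>\<omega>. (colcomb n c j \<omega>) ^ 4 \<partial>P) \<le> 3 * sd ^ 4 * real n ^ 3 * (\<Sum>k=1..n. (c k) ^ 4)" .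
qed

end

lemma colcomb_indep:
  fixes \<phi> \<psi> :: "real \<Rightarrow> real"
  assumes sd: "sd > 0" and n: "n \<ge> 1" and j: "j \<in> {1..p}" "j' \<in> {1..p}" "j \<noteq> j'"
    and [measurable]: "\<phi> \<in> borel_measurable borel" "\<psi> \<in> borel_measurable borel"
    and int: "integrable (iid_gauss ({1..n} \<times> {1..p}) sd) (\<lambda>\<omega>. \<phi> (colcomb n c j \<omega>))"
             "integrable (iid_gauss ({1..n} \<times> {1..p}) sd) (\<lambda>\<omega>. \<psi> (colcomb n c j' \<omega>))"
  shows "integrable (iid_gauss ({1..n} \<times> {1..p}) sd)
           (\<lambda>\<omega>. \<phi> (colcomb n c j \<omega>) * \<psi> (colcomb n c j' \<omega>))"
    and "(\<integral>\<omega>. \<phi> (colcomb n c j \<omega>) * \<psi> (colcomb n c j' \<omega>) \<partial>iid_gauss ({1..n} \<times> {1..p}) sd)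
       = (\<integral>\<omega>. \<phi> (colcomb n c j \<omega>) \<partial>iid_gauss ({1..n} \<times> {1..p}) sd)
       * (\<integral>\<omega>. \<psi> (colcomb n c j' \<omega>) \<partial>iid_gauss ({1..n} \<times> {1..p}) sd)"
proof -
  let ?I = "{1..n} \<times> {1..p}"
  interpret P: prob_space "iid_gauss ?I sd" by (rule prob_space_iid_gauss[OF sd])
  define K where "K l = {1..n} \<times> {l}" for l :: nat
  define F where "F l = (if l = j then \<phi> else \<psi>)" for l
  have "P.indep_vars (\<lambda>_. gauss sd) (\<lambda>x \<omega>. \<omega> x) ?I"
    by (rule indep_coordinates[OF sd]) (use n j in auto)
  then have "P.indep_vars (\<lambda>l. iid_gauss (K l) sd) (\<lambda>l \<omega>. restrict \<omega> (K l)) {1..p}"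
    by (rule P.indep_vars_restrict) (auto simp: K_def disjoint_family_on_def)
  then have "P.indep_vars (\<lambda>l. iid_gauss (K l) sd) (\<lambda>l \<omega>. restrict \<omega> (K l)) {j, j'}"
    by (rule P.indep_vars_subset) (use j in auto)
  then have ind: "P.indep_vars (\<lambda>_. borel) (\<lambda>l \<omega>. F l (colcomb n c l (restrict \<omega> (K l)))) {j, j'}"
    by (rule P.indep_vars_compose2) (simp add: F_def)
  have restrict: "colcomb n c l (restrict \<omega> (K l)) = colcomb n c l \<omega>" for l \<omega>
    unfolding colcomb_def K_def by (intro sum.cong) auto
  have int_F: "l \<in> {j, j'} \<Longrightarrow> integrable (iid_gauss ?I sd)
      (\<lambda>\<omega>. F l (colcomb n c l (restrict \<omega> (K l))))" for l
    using int j by (auto simp: restrict F_def)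
  have "integrable (iid_gauss ?I sd) (\<lambda>\<omega>. \<Prod>l\<in>{j, j'}. F l (colcomb n c l (restrict \<omega> (K l))))"
    by (rule P.indep_vars_integrable[OF _ ind int_F]) simp
  then show "integrable (iid_gauss ?I sd) (\<lambda>\<omega>. \<phi> (colcomb n c j \<omega>) * \<psi> (colcomb n c j' \<omega>))"
    using j by (simp add: restrict F_def)
  have "(\<integral>\<omega>. (\<Prod>l\<in>{j, j'}. F l (colcomb n c l (restrict \<omega> (K l)))) \<partial>iid_gauss ?I sd)
        = (\<Prod>l\<in>{j, j'}. \<integral>\<omega>. F l (colcomb n c l (restrict \<omega> (K l))) \<partial>iid_gauss ?I sd)"
    by (rule P.indep_vars_lebesgue_integral[OF _ ind int_F]) simp
  then show "(\<integral>\<omega>. \<phi> (colcomb n c j \<omega>) * \<psi> (colcomb n c j' \<omega>) \<partial>iid_gauss ?I sd) =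
      (\<integral>\<omega>. \<phi> (colcomb n c j \<omega>) \<partial>iid_gauss ?I sd) * (\<integral>\<omega>. \<psi> (colcomb n c j' \<omega>) \<partial>iid_gauss ?I sd)"
    using j by (simp add: restrict F_def)
qed

lemma integral_square_sum_orthogonal:
  fixes Y :: "'j \<Rightarrow> 'a \<Rightarrow> real"
  assumes J: "finite J"
    and int: "\<And>j j'. j \<in> J \<Longrightarrow> j' \<in> J \<Longrightarrow> integrable M (\<lambda>x. Y j x * Y j' x)"
    and orth: "\<And>j j'. j \<in> J \<Longrightarrow> j' \<in> J \<Longrightarrow> j \<noteq> j' \<Longrightarrow> (\<integral>x. Y j x * Y j' x \<partial>M) = 0"
  shows "integrable M (\<lambda>x. (\<Sum>j\<in>J. Y j x)\<^sup>2)"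
    and "(\<integral>x. (\<Sum>j\<in>J. Y j x)\<^sup>2 \<partial>M) = (\<Sum>j\<in>J. \<integral>x. (Y j x)\<^sup>2 \<partial>M)"
proof -
  have expand: "(\<Sum>j\<in>J. Y j x)\<^sup>2 = (\<Sum>j\<in>J. \<Sum>j'\<in>J. Y j x * Y j' x)" for x
    unfolding power2_eq_square sum_product ..
  show "integrable M (\<lambda>x. (\<Sum>j\<in>J. Y j x)\<^sup>2)"
    unfolding expand by (rule integral_double_sum(1)[OF int])
  have "(\<integral>x. (\<Sum>j\<in>J. Y j x)\<^sup>2 \<partial>M) = (\<Sum>j\<in>J. \<Sum>j'\<in>J. \<integral>x. Y j x * Y j' x \<partial>M)"
    unfolding expand by (rule integral_double_sum(2)[OF int])
  also have "\<dots> = (\<Sum>j\<in>J. \<Sum>j'\<in>J. if j = j' then \<integral>x. (Y j x)\<^sup>2 \<partial>M else 0)"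
    using orth by (intro sum.cong refl) (auto simp: power2_eq_square)
  also have "\<dots> = (\<Sum>j\<in>J. \<integral>x. (Y j x)\<^sup>2 \<partial>M)"
    using J by simp
  finally show "(\<integral>x. (\<Sum>j\<in>J. Y j x)\<^sup>2 \<partial>M) = (\<Sum>j\<in>J. \<integral>x. (Y j x)\<^sup>2 \<partial>M)" .
qed

text \<open>The bound on the second moment comes from \<open>(x + y - z)\<^sup>2 \<le> 3 (x\<^sup>2 + y\<^sup>2 + z\<^sup>2)\<close>.\<close>
lemma (in prob_space) quadratic_moments:
  fixes Z :: "'a \<Rightarrow> real"
  assumes int1: "integrable M Z" and int2: "integrable M (\<lambda>x. (Z x)\<^sup>2)"
    and int4: "integrable M (\<lambda>x. (Z x) ^ 4)"
  shows "integrable M (\<lambda>x. a * Z x + (Z x)\<^sup>2 - s)"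
    and "expectation (\<lambda>x. a * Z x + (Z x)\<^sup>2 - s) = a * expectation Z + expectation (\<lambda>x. (Z x)\<^sup>2) - s"
    and "integrable M (\<lambda>x. (a * Z x + (Z x)\<^sup>2 - s)\<^sup>2)"
    and "expectation (\<lambda>x. (a * Z x + (Z x)\<^sup>2 - s)\<^sup>2) \<le>
           3 * a\<^sup>2 * expectation (\<lambda>x. (Z x)\<^sup>2) + 3 * expectation (\<lambda>x. (Z x) ^ 4) + 3 * s\<^sup>2"
proof -
  show "integrable M (\<lambda>x. a * Z x + (Z x)\<^sup>2 - s)"
    using int1 int2 by simp
  show "expectation (\<lambda>x. a * Z x + (Z x)\<^sup>2 - s) = a * expectation Z + expectation (\<lambda>x. (Z x)\<^sup>2) - s"
    using int1 int2 by (simp add: prob_space)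
  define R where "R x = 3 * a\<^sup>2 * (Z x)\<^sup>2 + 3 * (Z x) ^ 4 + 3 * s\<^sup>2" for x
  have le: "(a * Z x + (Z x)\<^sup>2 - s)\<^sup>2 \<le> R x" for x
  proof -
    have "0 \<le> (a * Z x - (Z x)\<^sup>2)\<^sup>2 + (a * Z x + s)\<^sup>2 + ((Z x)\<^sup>2 + s)\<^sup>2" by simp
    then show ?thesis unfolding R_def by (simp add: power2_eq_square eval_nat_numeral algebra_simps)
  qed
  have intR: "integrable M R" unfolding R_def using int2 int4 by simp
  show int: "integrable M (\<lambda>x. (a * Z x + (Z x)\<^sup>2 - s)\<^sup>2)"
  proof (rule Bochner_Integration.integrable_bound[OF intR])
    show "(\<lambda>x. (a * Z x + (Z x)\<^sup>2 - s)\<^sup>2) \<in> borel_measurable M"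
      using borel_measurable_integrable[OF int1] by measurable
  qed (use le in \<open>auto intro!: AE_I2 order_trans[OF _ abs_ge_self]\<close>)
  have "expectation (\<lambda>x. (a * Z x + (Z x)\<^sup>2 - s)\<^sup>2) \<le> expectation R"
    by (rule integral_mono[OF int intR le])
  also have "\<dots> = 3 * a\<^sup>2 * expectation (\<lambda>x. (Z x)\<^sup>2) + 3 * expectation (\<lambda>x. (Z x) ^ 4) + 3 * s\<^sup>2"
    unfolding R_def using int2 int4 by (simp add: prob_space)
  finally show "expectation (\<lambda>x. (a * Z x + (Z x)\<^sup>2 - s)\<^sup>2) \<le>
      3 * a\<^sup>2 * expectation (\<lambda>x. (Z x)\<^sup>2) + 3 * expectation (\<lambda>x. (Z x) ^ 4) + 3 * s\<^sup>2" .
qed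

lemma column_quadratic_moments:
  fixes n p j :: nat and sd a :: real and b c :: "nat \<Rightarrow> real"
  assumes sd: "sd > 0" and j: "j \<in> {1..p}"
  defines "s \<equiv> sd\<^sup>2 * (\<Sum>k=1..n. (c k)\<^sup>2)"
  shows "integrable (iid_gauss ({1..n} \<times> {1..p}) sd)
           (\<lambda>W. 2 * a * b j * colcomb n c j W + (colcomb n c j W)\<^sup>2 - s)"
    and "(\<integral>W. 2 * a * b j * colcomb n c j W + (colcomb n c j W)\<^sup>2 - s
           \<partial>iid_gauss ({1..n} \<times> {1..p}) sd) = 0"
    and "integrable (iid_gauss ({1..n} \<times> {1..p}) sd)
           (\<lambda>W. (2 * a * b j * colcomb n c j W + (colcomb n c j W)\<^sup>2 - s)\<^sup>2)"
    and "(\<integral>W. (2 * a * b j * colcomb n c j W + (colcomb n c j W)\<^sup>2 - s)\<^sup>2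
           \<partial>iid_gauss ({1..n} \<times> {1..p}) sd)
         \<le> 12 * a\<^sup>2 * s * (b j)\<^sup>2 + 9 * sd ^ 4 * real n ^ 3 * (\<Sum>k=1..n. (c k) ^ 4) + 3 * s\<^sup>2"
proof -
  interpret P: prob_space "iid_gauss ({1..n} \<times> {1..p}) sd" by (rule prob_space_iid_gauss[OF sd])
  note z1 = colcomb_moment_1[OF sd j, where n = n and c = c]
    and z2 = colcomb_moment_2[OF sd j, where n = n and c = c]
    and z4 = colcomb_moment_4[OF sd j, where n = n and c = c]
  note m = P.quadratic_moments[OF z1(1) z2(1) z4(1), where a = "2 * a * b j" and s = s]
  show "integrable (iid_gauss ({1..n} \<times> {1..p}) sd)
      (\<lambda>W. 2 * a * b j * colcomb n c j W + (colcomb n c j W)\<^sup>2 - s)"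
    by (rule m(1))
  show "(\<integral>W. 2 * a * b j * colcomb n c j W + (colcomb n c j W)\<^sup>2 - s
      \<partial>iid_gauss ({1..n} \<times> {1..p}) sd) = 0"
    using m(2) z1(2) z2(2) unfolding s_def by simp
  show "integrable (iid_gauss ({1..n} \<times> {1..p}) sd)
      (\<lambda>W. (2 * a * b j * colcomb n c j W + (colcomb n c j W)\<^sup>2 - s)\<^sup>2)"
    by (rule m(3))
  have "(\<integral>W. (2 * a * b j * colcomb n c j W + (colcomb n c j W)\<^sup>2 - s)\<^sup>2 \<partial>iid_gauss ({1..n} \<times> {1..p}) sd)
      \<le> 3 * (2 * a * b j)\<^sup>2 * s + 3 * (3 * sd ^ 4 * real n ^ 3 * (\<Sum>k=1..n. (c k) ^ 4)) + 3 * s\<^sup>2"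
    using m(4) z4(2) unfolding z2(2) s_def by linarith
  then show "(\<integral>W. (2 * a * b j * colcomb n c j W + (colcomb n c j W)\<^sup>2 - s)\<^sup>2
      \<partial>iid_gauss ({1..n} \<times> {1..p}) sd)
      \<le> 12 * a\<^sup>2 * s * (b j)\<^sup>2 + 9 * sd ^ 4 * real n ^ 3 * (\<Sum>k=1..n. (c k) ^ 4) + 3 * s\<^sup>2"
    by (simp add: power_mult_distrib algebra_simps)
qed

text \<open>Summing over the columns: the quadratics of distinct columns are independent and centred,
  hence orthogonal, so the second moment of their sum grows only linearly in \<open>p\<close>.\<close>
lemma centred_quadratic_sum_moment:
  fixes a :: real and b c :: "nat \<Rightarrow> real"
  assumes sd: "sd > 0" and n: "n \<ge> 1"
  defines "s \<equiv> sd\<^sup>2 * (\<Sum>k=1..n. (c k)\<^sup>2)"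
  shows "integrable (iid_gauss ({1..n} \<times> {1..p}) sd)
      (\<lambda>W. (\<Sum>j=1..p. 2 * a * b j * colcomb n c j W + (colcomb n c j W)\<^sup>2 - s)\<^sup>2)"
    and "(\<integral>W. (\<Sum>j=1..p. 2 * a * b j * colcomb n c j W + (colcomb n c j W)\<^sup>2 - s)\<^sup>2
            \<partial>iid_gauss ({1..n} \<times> {1..p}) sd)
         \<le> (\<Sum>j=1..p. 12 * a\<^sup>2 * s * (b j)\<^sup>2 + 9 * sd ^ 4 * real n ^ 3 * (\<Sum>k=1..n. (c k) ^ 4) + 3 * s\<^sup>2)"
proof -
  let ?P = "iid_gauss ({1..n} \<times> {1..p}) sd"
  define q where "q j z = 2 * a * b j * z + z\<^sup>2 - s" for j z
  have q_measurable [measurable]: "q j \<in> borel_measurable borel" for j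
    unfolding q_def by measurable
  note column = column_quadratic_moments[OF sd, where a = a and b = b and c = c and n = n,
      folded s_def]
  have int_prod: "integrable ?P (\<lambda>W. q j (colcomb n c j W) * q j' (colcomb n c j' W))"
    and orth: "j \<noteq> j' \<Longrightarrow> (\<integral>W. q j (colcomb n c j W) * q j' (colcomb n c j' W) \<partial>?P) = 0"
    if j: "j \<in> {1..p}" and j': "j' \<in> {1..p}" for j j'
  proof -
    show "integrable ?P (\<lambda>W. q j (colcomb n c j W) * q j' (colcomb n c j' W))"
      using column(3)[OF j] colcomb_indep(1)[OF sd n j j' _ _ _ column(1)[OF j] column(1)[OF j']]
      unfolding q_def by (cases "j = j'") (simp_all add: power2_eq_square)
    show "(\<integral>W. q j (colcomb n c j W) * q j' (colcomb n c j' W) \<partial>?P) = 0" if "j \<noteq> j'"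
      using colcomb_indep(2)[OF sd n j j' that _ _ column(1)[OF j] column(1)[OF j']]
        column(2)[OF j] column(2)[OF j'] unfolding q_def by simp
  qed
  note pythagoras = integral_square_sum_orthogonal[of "{1..p}" ?P "\<lambda>j W. q j (colcomb n c j W)",
      OF _ int_prod orth]
  show "integrable ?P (\<lambda>W. (\<Sum>j=1..p. 2 * a * b j * colcomb n c j W + (colcomb n c j W)\<^sup>2 - s)\<^sup>2)"
    using pythagoras(1) unfolding q_def by simp
  have "(\<integral>W. (\<Sum>j=1..p. q j (colcomb n c j W))\<^sup>2 \<partial>?P) = (\<Sum>j=1..p. \<integral>W. (q j (colcomb n c j W))\<^sup>2 \<partial>?P)"
    using pythagoras(2) by simp
  also have "\<dots> \<le> (\<Sum>j=1..p. 12 * a\<^sup>2 * s * (b j)\<^sup>2 + 9 * sd ^ 4 * real n ^ 3 * (\<Sum>k=1..n. (c k) ^ 4) + 3 * s\<^sup>2)"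
    using column(4) unfolding q_def by (rule sum_mono)
  finally show "(\<integral>W. (\<Sum>j=1..p. 2 * a * b j * colcomb n c j W + (colcomb n c j W)\<^sup>2 - s)\<^sup>2 \<partial>?P)
      \<le> (\<Sum>j=1..p. 12 * a\<^sup>2 * s * (b j)\<^sup>2 + 9 * sd ^ 4 * real n ^ 3 * (\<Sum>k=1..n. (c k) ^ 4) + 3 * s\<^sup>2)"
    unfolding q_def .
qed

lemma count_above: "(\<Sum>k=1..n. if m < k then 1 else 0 :: real) = real (n - m)"
proof (induction n)
  case (Suc n)
  then show ?case by (auto simp: sum.cl_ivl_Suc of_nat_diff Suc_diff_le)
qed simp

lemma Xbar_eq:
  assumes "j \<in> {1..n-1}"
  shows "Xbar n d k j = d j * ((if j < k then 1 else 0) - real (n - j) / real n)"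
proof -
  have "(\<Sum>k'=1..n. Xmat d k' j) = d j * (\<Sum>k'=1..n. if j < k' then 1 else 0 :: real)"
    unfolding Xmat_def sum_distrib_left by (intro sum.cong) auto
  also have "\<dots> = d j * real (n - j)" by (simp only: count_above)
  finally show ?thesis unfolding Xbar_def Xmat_def by (simp add: algebra_simps)
qed

lemma Xbar_gram:
  assumes i: "i \<in> {1..n-1}" and j: "j \<in> {1..n-1}"
  shows "(\<Sum>k=1..n. Xbar n d k i * Xbar n d k j) =
     d i * d j * (real n - real (max i j) - real (n - i) * real (n - j) / real n)"
proof -
  have n: "real n > 0" using i by auto
  define \<alpha> where "\<alpha> = real (n - i) / real n"
  define \<beta> where "\<beta> = real (n - j) / real n"
  let ?e = "\<lambda>m k. if m < k then 1 else 0 :: real"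
  have "(\<Sum>k=1..n. Xbar n d k i * Xbar n d k j) =
        d i * d j * (\<Sum>k=1..n. ?e (max i j) k - \<beta> * ?e i k - \<alpha> * ?e j k + \<alpha> * \<beta>)"
    unfolding sum_distrib_left
    by (intro sum.cong refl) (simp add: Xbar_eq[OF i] Xbar_eq[OF j] \<alpha>_def \<beta>_def algebra_simps)
  also have "(\<Sum>k=1..n. ?e (max i j) k - \<beta> * ?e i k - \<alpha> * ?e j k + \<alpha> * \<beta>)
      = real (n - max i j) - \<beta> * real (n - i) - \<alpha> * real (n - j) + real n * \<alpha> * \<beta>"
    unfolding sum.distrib sum_subtractf sum_distrib_left[symmetric] count_above by simp
  also have "\<dots> = real n - real (max i j) - real (n - i) * real (n - j) / real n"
  proof -
    have e: "real (n - i) = real n - real i" "real (n - j) = real n - real j"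
      "real (n - max i j) = real n - real (max i j)"
      using i j by (auto simp: of_nat_diff)
    show ?thesis using n unfolding e \<alpha>_def \<beta>_def by (simp add: field_simps)
  qed
  finally show ?thesis .
qed

text \<open>The two quantities describing row \<open>i\<close> of \<open>X\<^sup>T Y\<close>: the coefficient of the signal row
  \<open>\<beta>*\<^sub>u\<close> in it, and the variance of each of its noise entries.\<close>
definition signal :: "nat \<Rightarrow> (nat \<Rightarrow> real) \<Rightarrow> nat \<Rightarrow> nat \<Rightarrow> real" where
  "signal n d u i = (\<Sum>k=1..n. Xbar n d k i * Xbar n d k u)"

definition noise_var :: "real \<Rightarrow> nat \<Rightarrow> (nat \<Rightarrow> real) \<Rightarrow> nat \<Rightarrow> real" where
  "noise_var sd n d i = sd\<^sup>2 * (\<Sum>k=1..n. (Xbar n d k i)\<^sup>2)"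

lemma chat_eq:
  assumes u: "u \<in> {1..n-1}"
  shows "chat n d u b W i j = signal n d u i * b j + colcomb n (\<lambda>k. Xbar n d k i) j W"
proof -
  have "Ybar n d u b W k j = Xbar n d k u * b j + W (k, j)" for k
  proof -
    have "(\<Sum>i'=1..n-1. Xbar n d k i' * beta_star u b i' j) =
        (\<Sum>i'=1..n-1. if i' = u then Xbar n d k u * b j else 0)"
      unfolding beta_star_def by (intro sum.cong) auto
    then show ?thesis using u unfolding Ybar_def by simp
  qed
  then show ?thesis
    unfolding chat_def signal_def colcomb_def by (simp add: sum.distrib sum_distrib_left algebra_simps)
qed

lemma Gfun_eq:
  assumes i: "i \<in> {1..n-1}" and u: "u \<in> {1..n-1}"
  shows "Gfun n d u sd bb2 i = (signal n d u i)\<^sup>2 * bb2 + noise_var sd n d i"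
proof -
  have var: "(\<Sum>k=1..n. (Xbar n d k i)\<^sup>2) = d i * d i * (real n - real i - real (n - i) * real (n - i) / real n)"
    using Xbar_gram[OF i i, of d] by (simp add: power2_eq_square)
  have sig: "signal n d u i = d i * d u * (real n - real (max i u) - real (n - i) * real (n - u) / real n)"
    using Xbar_gram[OF i u, of d] unfolding signal_def .
  have n: "real n > 0" and e: "real (n - i) = real n - real i" "real (n - u) = real n - real u"
    using i u by (auto simp: of_nat_diff)
  show ?thesis
    unfolding Gfun_def noise_var_def var sig e
    using n by (cases "i \<le> u") (simp_all add: max_def field_simps power2_eq_square)
qed

definition row_stat :: "nat \<Rightarrow> (nat \<Rightarrow> real) \<Rightarrow> nat \<Rightarrow> (nat \<Rightarrow> real) \<Rightarrow> nat
    \<Rightarrow> (nat \<times> nat \<Rightarrow> real) \<Rightarrow> nat \<Rightarrow> real" where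
  "row_stat n d u b p W i = (\<Sum>j=1..p. (chat n d u b W i j)\<^sup>2) / real p"

definition row_mean :: "nat \<Rightarrow> (nat \<Rightarrow> real) \<Rightarrow> nat \<Rightarrow> real \<Rightarrow> (nat \<Rightarrow> real) \<Rightarrow> nat \<Rightarrow> nat \<Rightarrow> real" where
  "row_mean n d u sd b p i = (signal n d u i)\<^sup>2 * ((\<Sum>j=1..p. (b j)\<^sup>2) / real p) + noise_var sd n d i"

text \<open>Squaring and scaling by \<open>1/p\<close> is monotone on nonnegative values, so maximisers of the
  row norm maximise the row statistic.\<close>
lemma argmax_row_norm_imp_row_stat:
  "argmax_set S (chat_row_norm n d u b p W) \<subseteq> argmax_set S (row_stat n d u b p W)"
  unfolding argmax_set_def chat_row_norm_def row_stat_def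
  by (auto intro!: divide_right_mono simp: sum_nonneg)

lemma row_stat_deviation:
  assumes u: "u \<in> {1..n-1}" and p: "p \<ge> 1"
  shows "row_stat n d u b p W i - row_mean n d u sd b p i =
     (\<Sum>j=1..p. 2 * signal n d u i * b j * colcomb n (\<lambda>k. Xbar n d k i) j W
        + (colcomb n (\<lambda>k. Xbar n d k i) j W)\<^sup>2 - noise_var sd n d i) / real p"
proof -
  let ?a = "signal n d u i" and ?s = "noise_var sd n d i" and ?Z = "\<lambda>j. colcomb n (\<lambda>k. Xbar n d k i) j W"
  have "(\<Sum>j=1..p. (chat n d u b W i j)\<^sup>2) =
      (\<Sum>j=1..p. ?a\<^sup>2 * (b j)\<^sup>2 + (2 * ?a * b j * ?Z j + (?Z j)\<^sup>2 - ?s) + ?s)"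
    unfolding chat_eq[OF u] by (intro sum.cong refl) (simp add: power2_eq_square algebra_simps)
  also have "\<dots> = ?a\<^sup>2 * (\<Sum>j=1..p. (b j)\<^sup>2) + (\<Sum>j=1..p. 2 * ?a * b j * ?Z j + (?Z j)\<^sup>2 - ?s) + real p * ?s"
    by (simp add: sum.distrib sum_subtractf sum_distrib_left)
  finally show ?thesis
    using p unfolding row_stat_def row_mean_def by (simp add: field_simps)
qed

text \<open>Mean-square bound for the row statistic: its squared deviation from the mean is the squared
  column sum bounded above, divided by \<open>p\<^sup>2\<close>, hence of order \<open>1/p\<close>.\<close>
lemma row_stat_mean_square_bound:
  fixes d b :: "nat \<Rightarrow> real" and i :: nat
  assumes sd: "sd > 0" and u: "u \<in> {1..n-1}" and p: "p \<ge> 1"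
  defines "K1 \<equiv> 12 * (signal n d u i)\<^sup>2 * noise_var sd n d i"
    and "K2 \<equiv> 9 * sd ^ 4 * real n ^ 3 * (\<Sum>k=1..n. (Xbar n d k i) ^ 4) + 3 * (noise_var sd n d i)\<^sup>2"
  shows "integrable (noise_space sd n p) (\<lambda>W. (row_stat n d u b p W i - row_mean n d u sd b p i)\<^sup>2)"
    and "(\<integral>W. (row_stat n d u b p W i - row_mean n d u sd b p i)\<^sup>2 \<partial>noise_space sd n p)
           \<le> (K1 * ((\<Sum>j=1..p. (b j)\<^sup>2) / real p) + K2) / real p"
proof -
  have n: "n \<ge> 1" using u by auto
  let ?a = "signal n d u i" and ?s = "noise_var sd n d i" and ?c = "\<lambda>k. Xbar n d k i"
  let ?S = "\<lambda>W. (\<Sum>j=1..p. 2 * ?a * b j * colcomb n ?c j W + (colcomb n ?c j W)\<^sup>2 - ?s)"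
  note moment = centred_quadratic_sum_moment[OF sd n, where a = ?a and b = b and c = ?c and p = p,
      folded noise_var_def]
  have dev: "(row_stat n d u b p W i - row_mean n d u sd b p i)\<^sup>2 = (?S W)\<^sup>2 / (real p)\<^sup>2" for W
    unfolding row_stat_deviation[OF u p] by (simp add: power_divide)
  show "integrable (noise_space sd n p) (\<lambda>W. (row_stat n d u b p W i - row_mean n d u sd b p i)\<^sup>2)"
    unfolding dev noise_space_eq using moment(1) by simp
  have "(\<integral>W. (row_stat n d u b p W i - row_mean n d u sd b p i)\<^sup>2 \<partial>noise_space sd n p)
      = (\<integral>W. (?S W)\<^sup>2 \<partial>iid_gauss ({1..n} \<times> {1..p}) sd) / (real p)\<^sup>2"
    unfolding dev noise_space_eq by simp
  also have "\<dots> \<le> (\<Sum>j=1..p. K1 * (b j)\<^sup>2 + K2) / (real p)\<^sup>2"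
    using moment(2) unfolding K1_def K2_def
    by (intro divide_right_mono) (simp_all add: algebra_simps)
  also have "\<dots> = (K1 * ((\<Sum>j=1..p. (b j)\<^sup>2) / real p) + K2) / real p"
    using p by (simp add: sum.distrib sum_distrib_left[symmetric] power2_eq_square field_simps)
  finally show "(\<integral>W. (row_stat n d u b p W i - row_mean n d u sd b p i)\<^sup>2 \<partial>noise_space sd n p)
      \<le> (K1 * ((\<Sum>j=1..p. (b j)\<^sup>2) / real p) + K2) / real p" .
qed

lemma row_stat_mean_square_tendsto:
  assumes sd: "sd > 0" and u: "u \<in> {1..n-1}"
    and b: "(\<lambda>p. (\<Sum>j=1..p. (b j)\<^sup>2) / real p) \<longlonglongrightarrow> bb2"
  shows "(\<lambda>p. \<integral>W. (row_stat n d u b p W i - row_mean n d u sd b p i)\<^sup>2 \<partial>noise_space sd n p)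
           \<longlonglongrightarrow> 0"
proof -
  define K1 where "K1 = 12 * (signal n d u i)\<^sup>2 * noise_var sd n d i"
  define K2 where "K2 = 9 * sd ^ 4 * real n ^ 3 * (\<Sum>k=1..n. (Xbar n d k i) ^ 4) + 3 * (noise_var sd n d i)\<^sup>2"
  have lower: "\<forall>\<^sub>F p in sequentially.
      0 \<le> (\<integral>W. (row_stat n d u b p W i - row_mean n d u sd b p i)\<^sup>2 \<partial>noise_space sd n p)"
    by (intro always_eventually allI Bochner_Integration.integral_nonneg) simp
  have upper: "\<forall>\<^sub>F p in sequentially.
      (\<integral>W. (row_stat n d u b p W i - row_mean n d u sd b p i)\<^sup>2 \<partial>noise_space sd n p)
      \<le> (K1 * ((\<Sum>j=1..p. (b j)\<^sup>2) / real p) + K2) / real p"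
    using eventually_ge_at_top[of 1]
    by eventually_elim (unfold K1_def K2_def, rule row_stat_mean_square_bound(2)[OF sd u])
  have "(\<lambda>p. (K1 * ((\<Sum>j=1..p. (b j)\<^sup>2) / real p) + K2) * inverse (real p)) \<longlonglongrightarrow> (K1 * bb2 + K2) * 0"
    by (intro tendsto_mult tendsto_add tendsto_mult_left b tendsto_const lim_inverse_n)
  then show ?thesis
    using tendsto_sandwich[OF lower upper tendsto_const] by (simp add: divide_inverse)
qed

lemma row_mean_tendsto:
  assumes i: "i \<in> {1..n-1}" and u: "u \<in> {1..n-1}"
    and b: "(\<lambda>p. (\<Sum>j=1..p. (b j)\<^sup>2) / real p) \<longlonglongrightarrow> bb2"
  shows "(\<lambda>p. row_mean n d u sd b p i) \<longlonglongrightarrow> Gfun n d u sd bb2 i"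
  unfolding row_mean_def Gfun_eq[OF i u] by (intro tendsto_intros b)

text \<open>Any perturbation of size less than half the
  gap between the maximum of \<open>G\<close> and its non-maximal values is admissible.\<close>
lemma argmax_set_stable:
  fixes G :: "nat \<Rightarrow> real"
  assumes S: "finite S"
  shows "\<exists>\<delta> > 0. \<forall>T. (\<forall>i\<in>S. \<bar>T i - G i\<bar> < \<delta>) \<longrightarrow> argmax_set S T \<subseteq> argmax_set S G"
proof (intro exI conjI allI impI)
  define gaps where "gaps = (\<lambda>i. Max (G ` S) - G i) ` (S - argmax_set S G)"
  define \<delta> where "\<delta> = Min (insert 1 gaps) / 2"
  have below_max: "G i < Max (G ` S)" if i: "i \<in> S - argmax_set S G" for i
  proof -
    obtain i' where "i' \<in> S" "G i < G i'"
      using i unfolding argmax_set_def by force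
    moreover have "G i' \<le> Max (G ` S)" using S \<open>i' \<in> S\<close> by simp
    ultimately show ?thesis by linarith
  qed
  have fin: "finite (insert 1 gaps)" unfolding gaps_def using S by simp
  show "\<delta> > 0"
    using Min_in[OF fin] below_max unfolding \<delta>_def gaps_def by fastforce
  have gap: "2 * \<delta> \<le> Max (G ` S) - G i" if "i \<in> S - argmax_set S G" for i
    using Min_le[OF fin, of "Max (G ` S) - G i"] that unfolding \<delta>_def gaps_def by auto
  fix T assume close: "\<forall>i\<in>S. \<bar>T i - G i\<bar> < \<delta>"
  show "argmax_set S T \<subseteq> argmax_set S G"
  proof (rule subsetI, rule ccontr)
    fix m assume m: "m \<in> argmax_set S T" and not_max: "m \<notin> argmax_set S G"
    then have "m \<in> S" "S \<noteq> {}" unfolding argmax_set_def by auto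
    have "Max (G ` S) \<in> G ` S" using S \<open>S \<noteq> {}\<close> by simp
    then obtain m0 where "m0 \<in> S" "G m0 = Max (G ` S)" by auto
    moreover have "T m0 \<le> T m" using m \<open>m0 \<in> S\<close> unfolding argmax_set_def by auto
    moreover have "2 * \<delta> \<le> Max (G ` S) - G m" using gap \<open>m \<in> S\<close> not_max by blast
    moreover have "\<bar>T m0 - G m0\<bar> < \<delta>" "\<bar>T m - G m\<bar> < \<delta>"
      using close \<open>m0 \<in> S\<close> \<open>m \<in> S\<close> by auto
    ultimately show False by linarith
  qed
qed

lemma tendsto_prob_one_Markov:
  fixes E :: "nat \<Rightarrow> 'a \<Rightarrow> real"
  assumes prob: "\<And>p. prob_space (M p)" and c: "c > 0"
    and events: "\<forall>\<^sub>F p in sequentially. A p \<in> sets (M p)"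
    and int: "\<forall>\<^sub>F p in sequentially. integrable (M p) (E p)"
    and nonneg: "\<And>p \<omega>. 0 \<le> E p \<omega>"
    and large_off_event: "\<forall>\<^sub>F p in sequentially. \<forall>\<omega>\<in>space (M p) - A p. c \<le> E p \<omega>"
    and mean: "(\<lambda>p. \<integral>\<omega>. E p \<omega> \<partial>M p) \<longlonglongrightarrow> 0"
  shows "(\<lambda>p. measure (M p) (A p)) \<longlonglongrightarrow> 1"
proof (rule tendsto_sandwich)
  show "\<forall>\<^sub>F p in sequentially. 1 - (\<integral>\<omega>. E p \<omega> \<partial>M p) / c \<le> measure (M p) (A p)"
    using events int large_off_event
  proof eventually_elim
    case (elim p)
    interpret prob_space "M p" by (rule prob)
    have "prob (space (M p) - A p) \<le> prob {\<omega> \<in> space (M p). c \<le> E p \<omega>}"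
      using elim(1,3) borel_measurable_integrable[OF elim(2)]
      by (intro finite_measure_mono) auto
    also have "\<dots> \<le> (\<integral>\<omega>. E p \<omega> \<partial>M p) / c"
      using elim(2) c nonneg by (intro integral_Markov_inequality_measure) auto
    finally show ?case using prob_compl[OF elim(1)] by simp
  qed
  show "\<forall>\<^sub>F p in sequentially. measure (M p) (A p) \<le> 1"
    by (intro always_eventually allI prob_space.prob_le_1[OF prob])
  show "(\<lambda>p. 1 - (\<integral>\<omega>. E p \<omega> \<partial>M p) / c) \<longlonglongrightarrow> 1"
    using tendsto_diff[OF tendsto_const tendsto_divide_zero[OF mean, of c]] by simp
qed (rule tendsto_const)

lemma argmax_consistency:
  fixes T :: "nat \<Rightarrow> 'a \<Rightarrow> nat \<Rightarrow> real" and g :: "nat \<Rightarrow> nat \<Rightarrow> real" and G :: "nat \<Rightarrow> real"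
    and sel :: "nat \<Rightarrow> 'a \<Rightarrow> nat"
  assumes S: "finite S" and prob: "\<And>p. prob_space (M p)"
    and g_lim: "\<And>i. i \<in> S \<Longrightarrow> (\<lambda>p. g p i) \<longlonglongrightarrow> G i"
    and int: "\<And>i. i \<in> S \<Longrightarrow> \<forall>\<^sub>F p in sequentially. integrable (M p) (\<lambda>\<omega>. (T p \<omega> i - g p i)\<^sup>2)"
    and L2: "\<And>i. i \<in> S \<Longrightarrow> (\<lambda>p. \<integral>\<omega>. (T p \<omega> i - g p i)\<^sup>2 \<partial>M p) \<longlonglongrightarrow> 0"
    and selects: "\<forall>\<^sub>F p in sequentially. \<forall>\<omega>\<in>space (M p). sel p \<omega> \<in> argmax_set S (T p \<omega>)"
    and meas: "\<forall>\<^sub>F p in sequentially. sel p \<in> measurable (M p) (count_space UNIV)"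
  shows "(\<lambda>p. measure (M p) {\<omega> \<in> space (M p). sel p \<omega> \<in> argmax_set S G}) \<longlonglongrightarrow> 1"
proof -
  obtain \<delta> where \<delta>: "\<delta> > 0"
    and stable: "\<forall>T. (\<forall>i\<in>S. \<bar>T i - G i\<bar> < \<delta>) \<longrightarrow> argmax_set S T \<subseteq> argmax_set S G"
    using argmax_set_stable[OF S, of G] by (elim exE conjE)
  define E where "E p \<omega> = (\<Sum>i\<in>S. (T p \<omega> i - g p i)\<^sup>2)" for p \<omega>
  have int_all: "\<forall>\<^sub>F p in sequentially. \<forall>i\<in>S. integrable (M p) (\<lambda>\<omega>. (T p \<omega> i - g p i)\<^sup>2)"
    using S int by (simp add: eventually_ball_finite_distrib)
  show ?thesis
  proof (rule tendsto_prob_one_Markov[OF prob, where c = "(\<delta> / 2)\<^sup>2" and E = E])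
    show "(\<delta> / 2)\<^sup>2 > 0" using \<delta> by simp
    show "\<forall>\<^sub>F p in sequentially. {\<omega> \<in> space (M p). sel p \<omega> \<in> argmax_set S G} \<in> sets (M p)"
      using meas
    proof eventually_elim
      case (elim p)
      have "sel p -` argmax_set S G \<inter> space (M p) \<in> sets (M p)"
        by (rule measurable_sets[OF elim]) simp
      moreover have "sel p -` argmax_set S G \<inter> space (M p) =
          {\<omega> \<in> space (M p). sel p \<omega> \<in> argmax_set S G}" by auto
      ultimately show ?case by simp
    qed
    show "\<forall>\<^sub>F p in sequentially. integrable (M p) (E p)"
      using int_all by eventually_elim (auto simp: E_def[abs_def] intro!: Bochner_Integration.integrable_sum)
    show "0 \<le> E p \<omega>" for p \<omega> unfolding E_def by (simp add: sum_nonneg)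
    have "(\<lambda>p. \<Sum>i\<in>S. \<integral>\<omega>. (T p \<omega> i - g p i)\<^sup>2 \<partial>M p) \<longlonglongrightarrow> 0"
      by (intro tendsto_null_sum L2)
    moreover have "\<forall>\<^sub>F p in sequentially.
        (\<Sum>i\<in>S. \<integral>\<omega>. (T p \<omega> i - g p i)\<^sup>2 \<partial>M p) = (\<integral>\<omega>. E p \<omega> \<partial>M p)"
      using int_all by eventually_elim (simp add: E_def Bochner_Integration.integral_sum)
    ultimately show "(\<lambda>p. \<integral>\<omega>. E p \<omega> \<partial>M p) \<longlonglongrightarrow> 0"
      by (rule Lim_transform_eventually)
    have "\<forall>\<^sub>F p in sequentially. \<bar>g p i - G i\<bar> < \<delta> / 2" if "i \<in> S" for i
      using tendstoD[OF g_lim[OF that], of "\<delta> / 2"] \<delta> by (simp add: dist_real_def)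
    then have "\<forall>\<^sub>F p in sequentially. \<forall>i\<in>S. \<bar>g p i - G i\<bar> < \<delta> / 2"
      using S by (simp add: eventually_ball_finite_distrib)
    then show "\<forall>\<^sub>F p in sequentially. \<forall>\<omega>\<in>space (M p) - {\<omega> \<in> space (M p). sel p \<omega> \<in> argmax_set S G}.
        (\<delta> / 2)\<^sup>2 \<le> E p \<omega>"
      using selects
    proof eventually_elim
      case (elim p)
      show ?case
      proof (intro ballI, rule ccontr)
        fix \<omega> assume \<omega>: "\<omega> \<in> space (M p) - {\<omega> \<in> space (M p). sel p \<omega> \<in> argmax_set S G}"
          and small: "\<not> (\<delta> / 2)\<^sup>2 \<le> E p \<omega>"
        have T_close: "\<bar>T p \<omega> i - g p i\<bar> < \<delta> / 2" if i: "i \<in> S" for i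
        proof -
          have "(T p \<omega> i - g p i)\<^sup>2 \<le> E p \<omega>"
            unfolding E_def using S i by (intro member_le_sum) auto
          then have "\<bar>T p \<omega> i - g p i\<bar>\<^sup>2 < (\<delta> / 2)\<^sup>2" using small by (simp only: power2_abs not_le)
          then show ?thesis by (rule power2_less_imp_less) (use \<delta> in simp)
        qed
        have "\<forall>i\<in>S. \<bar>T p \<omega> i - G i\<bar> < \<delta>"
        proof
          fix i assume "i \<in> S"
          then have "\<bar>T p \<omega> i - g p i\<bar> < \<delta> / 2" "\<bar>g p i - G i\<bar> < \<delta> / 2"
            using T_close elim(1) by auto
          then show "\<bar>T p \<omega> i - G i\<bar> < \<delta>" by linarith
        qed
        then have "argmax_set S (T p \<omega>) \<subseteq> argmax_set S G"
          using stable by blast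
        moreover have "sel p \<omega> \<in> argmax_set S (T p \<omega>)" using elim(2) \<omega> by blast
        ultimately show False using \<omega> by blast
      qed
    qed
  qed
qed

theorem lemma1:
  fixes n u :: nat and d b :: "nat \<Rightarrow> real" and bb2 sd :: real
    and uhat :: "nat \<Rightarrow> (nat \<times> nat \<Rightarrow> real) \<Rightarrow> nat"
  assumes "n \<ge> 2" and "u \<in> {1..n-1}" and "real u \<ge> real n / 2"
    and "\<forall>i\<in>{1..n-1}. d i > 0"
    and "(\<lambda>p. (\<Sum>j=1..p. (b j)\<^sup>2) / real p) \<longlonglongrightarrow> bb2"
    and "sd > 0"
    and "\<forall>p\<ge>1. \<forall>W\<in>space (noise_space sd n p).
           uhat p W \<in> argmax_set {1..n-1} (chat_row_norm n d u b p W)"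
    and "\<forall>p\<ge>1. uhat p \<in> measurable (noise_space sd n p) (count_space UNIV)"
  shows "(\<lambda>p. measure (noise_space sd n p)
            {W \<in> space (noise_space sd n p).
               uhat p W \<in> argmax_set {1..n-1} (Gfun n d u sd bb2)}) \<longlonglongrightarrow> 1"
proof (rule argmax_consistency[where T = "row_stat n d u b" and g = "\<lambda>p. row_mean n d u sd b p"])
  note u = assms(2) and b = assms(5) and sd = assms(6)
  show "prob_space (noise_space sd n p)" for p
    unfolding noise_space_eq by (rule prob_space_iid_gauss[OF sd])
  show "(\<lambda>p. row_mean n d u sd b p i) \<longlonglongrightarrow> Gfun n d u sd bb2 i" if "i \<in> {1..n-1}" for i
    by (rule row_mean_tendsto[OF that u b])
  show "\<forall>\<^sub>F p in sequentially. integrable (noise_space sd n p)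
      (\<lambda>W. (row_stat n d u b p W i - row_mean n d u sd b p i)\<^sup>2)" for i
    using eventually_ge_at_top[of 1] by eventually_elim (rule row_stat_mean_square_bound(1)[OF sd u])
  show "(\<lambda>p. \<integral>W. (row_stat n d u b p W i - row_mean n d u sd b p i)\<^sup>2 \<partial>noise_space sd n p) \<longlonglongrightarrow> 0"
    for i by (rule row_stat_mean_square_tendsto[OF sd u b])
  show "\<forall>\<^sub>F p in sequentially. \<forall>W\<in>space (noise_space sd n p).
      uhat p W \<in> argmax_set {1..n-1} (row_stat n d u b p W)"
    using eventually_ge_at_top[of 1]
    by eventually_elim (use assms(7) argmax_row_norm_imp_row_stat in blast)
  show "\<forall>\<^sub>F p in sequentially. uhat p \<in> measurable (noise_space sd n p) (count_space UNIV)"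
    using eventually_ge_at_top[of 1] by eventually_elim (use assms(8) in blast)
qed simp

end
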